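(* Let $f=z^4+f_2z^2+f_3z+f_4$ with $f_j\in\mathbb{R}[x,y]$ homogeneous of degree $j$, and let $f=p_1^2+p_2^2+p_3^2$ with quadratic forms $p_i\in\mathbb{R}[x,y,z]$. Write $p_i=u_iz^2+v_iz+w_i$ with $u_i\in\mathbb{R}$, $v_i,w_i\in\mathbb{R}[x,y]$ homogeneous of degrees $1,2$. Then $u=(u_1,u_2,u_3)^t$ is a unit vector; choose $S\in O_3(\mathbb{R})$ with $Su=(1,0,0)^t$, let $(v'_i)=Sv$, $(w'_i)=Sw$, and put $\xi=2w'_1$, $\eta=2(v'_2w'_3-v'_3w'_2)$. Then $\eta^2+f_3^2=(f_2-\xi)(4f_4-\xi^2)$ and both $f_2-\xi$ and $4f_4-\xi^2$ are psd. Moreover $\xi$ does not depend on the choice of $S$, and depends only on the orthogonal equivalence class of the representation $f=\sum_i p_i^2$.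
   Context: psd means taking only nonnegative values on real points. Two representations $f=\sum_{i=1}^3p_i^2=\sum_{i=1}^3p_i'^2$ with quadratic forms $p_i,p_i'$ are (orthogonally) equivalent if there is $S=(s_{ij})\in O_3(\mathbb{R})$ with $p'_j=\sum_i s_{ij}p_i$ for $j=1,2,3$. *)

theory Defs
  imports "HOL-Analysis.Analysis"
begin

definition bin_form :: "nat \<Rightarrow> (real \<Rightarrow> real \<Rightarrow> real) \<Rightarrow> bool" where
  "bin_form d g \<longleftrightarrow> (\<exists>c :: nat \<Rightarrow> real. \<forall>x y. g x y = (\<Sum>k\<le>d. c k * x ^ k * y ^ (d - k)))"

definition tern_quad_form :: "(real \<Rightarrow> real \<Rightarrow> real \<Rightarrow> real) \<Rightarrow> bool" where
  "tern_quad_form q \<longleftrightarrow> (\<exists>c :: nat \<Rightarrow> nat \<Rightarrow> real. \<forall>x y z.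
      q x y z = (\<Sum>i\<le>2. \<Sum>j\<le>2 - i. c i j * x ^ i * y ^ j * z ^ (2 - i - j)))"

definition psd2 :: "(real \<Rightarrow> real \<Rightarrow> real) \<Rightarrow> bool" where
  "psd2 g \<longleftrightarrow> (\<forall>x y. g x y \<ge> 0)"

definition rep_decomp :: "(real \<Rightarrow> real \<Rightarrow> real \<Rightarrow> real^3) \<Rightarrow> real^3 \<Rightarrow>
    (real \<Rightarrow> real \<Rightarrow> real^3) \<Rightarrow> (real \<Rightarrow> real \<Rightarrow> real^3) \<Rightarrow> bool" where
  "rep_decomp p u v w \<longleftrightarrow>
     (\<forall>i. tern_quad_form (\<lambda>x y z. p x y z $ i)) \<and>
     (\<forall>i. bin_form 1 (\<lambda>x y. v x y $ i)) \<and>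
     (\<forall>i. bin_form 2 (\<lambda>x y. w x y $ i)) \<and>
     (\<forall>x y z i. p x y z $ i = u $ i * z ^ 2 + v x y $ i * z + w x y $ i)"

definition xi_of :: "real^3^3 \<Rightarrow> (real \<Rightarrow> real \<Rightarrow> real^3) \<Rightarrow> real \<Rightarrow> real \<Rightarrow> real" where
  "xi_of S w x y = 2 * (S *v w x y) $ 1"

definition eta_of :: "real^3^3 \<Rightarrow> (real \<Rightarrow> real \<Rightarrow> real^3) \<Rightarrow> (real \<Rightarrow> real \<Rightarrow> real^3)
    \<Rightarrow> real \<Rightarrow> real \<Rightarrow> real" where
  "eta_of S v w x y = 2 * ((S *v v x y) $ 2 * (S *v w x y) $ 3 - (S *v v x y) $ 3 * (S *v w x y) $ 2)"

end

theory Submission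
  imports Defs
begin

text \<open>
  Collecting powers of \<open>z\<close> in \<open>z\<^sup>4 + f\<^sub>2 z\<^sup>2 + f\<^sub>3 z + f\<^sub>4 = \<parallel>z\<^sup>2 u + z v + w\<parallel>\<^sup>2\<close> gives
  \<open>u\<bullet>u = 1\<close>, \<open>u\<bullet>v = 0\<close>, \<open>f\<^sub>2 = v\<bullet>v + 2 u\<bullet>w\<close>, \<open>f\<^sub>3 = 2 v\<bullet>w\<close> and \<open>f\<^sub>4 = w\<bullet>w\<close>.
  Since \<open>S\<close> is orthogonal with \<open>S u = e\<^sub>1\<close>, \<open>\<xi> = 2 w'\<^sub>1 = 2 u\<bullet>w\<close>, which is
  manifestly independent of \<open>S\<close> and unchanged when \<open>p\<close> is replaced by an orthogonal
  transform of itself. In the rotated frame \<open>v'\<^sub>1 = 0\<close>, so \<open>f\<^sub>2 - \<xi> = v'\<^sub>2\<^sup>2 + v'\<^sub>3\<^sup>2\<close>,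
  \<open>4f\<^sub>4 - \<xi>\<^sup>2 = 4(w'\<^sub>2\<^sup>2 + w'\<^sub>3\<^sup>2)\<close> and \<open>f\<^sub>3 = 2(v'\<^sub>2w'\<^sub>2 + v'\<^sub>3w'\<^sub>3)\<close>; the identity for
  \<open>\<eta>\<^sup>2 + f\<^sub>3\<^sup>2\<close> is then Lagrange's identity for two vectors in the plane.
\<close>

lemma quartic_eq_zero_coeffs:
  fixes a4 a3 a2 a1 a0 :: real
  assumes "\<forall>z. a4 * z ^ 4 + a3 * z ^ 3 + a2 * z ^ 2 + a1 * z + a0 = 0"
  shows "a4 = 0 \<and> a3 = 0 \<and> a2 = 0 \<and> a1 = 0 \<and> a0 = 0"
proof -
  from assms have "a4 * z ^ 4 + a3 * z ^ 3 + a2 * z ^ 2 + a1 * z + a0 = 0" for z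
    by blast
  from this[of 0] this[of 1] this[of "-1"] this[of 2] this[of "-2"] show ?thesis
    by simp
qed

lemma quadratic_vector_eq_coeffs:
  fixes a b c a' b' c' :: "'a::real_vector"
  assumes "\<forall>z::real. z\<^sup>2 *\<^sub>R a + z *\<^sub>R b + c = z\<^sup>2 *\<^sub>R a' + z *\<^sub>R b' + c'"
  shows "a = a' \<and> b = b' \<and> c = c'"
proof -
  have c: "c = c'" using assms[rule_format, of 0] by simp
  have "a + b = a' + b'" and "a - b = a' - b'"
    using assms[rule_format, of 1] assms[rule_format, of "-1"] c by (simp_all add: algebra_simps)
  then have "2 *\<^sub>R a = 2 *\<^sub>R a'" and "2 *\<^sub>R b = 2 *\<^sub>R b'"
    by (metis add_diff_add scaleR_2 add_diff_cancel_left' diff_add_eq)+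
  with c show ?thesis by simp
qed

lemma inner_quadratic_self:
  fixes u v w :: "'a::real_inner" and z :: real
  shows "(z\<^sup>2 *\<^sub>R u + z *\<^sub>R v + w) \<bullet> (z\<^sup>2 *\<^sub>R u + z *\<^sub>R v + w)
    = (u \<bullet> u) * z ^ 4 + 2 * (u \<bullet> v) * z ^ 3 + (v \<bullet> v + 2 * (u \<bullet> w)) * z\<^sup>2
      + 2 * (v \<bullet> w) * z + w \<bullet> w"
  by (simp add: inner_commute[of v u] inner_commute[of w u] inner_commute[of w v]
      power2_eq_square power3_eq_cube power4_eq_xxxx algebra_simps)

lemma orthogonal_matrix_inner:
  assumes "orthogonal_matrix (S::real^'n^'n)"
  shows "(S *v x) \<bullet> (S *v y) = x \<bullet> y"
  by (metis assms dot_lmul_matrix matrix_vector_mul_assoc matrix_vector_mul_lid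
      orthogonal_matrix transpose_matrix_vector)

lemma inner_vec3: "x \<bullet> (y::real^3) = x$1 * y$1 + x$2 * y$2 + x$3 * y$3"
  by (simp add: inner_vec_def sum_3)

lemma rep_decomp_vector:
  assumes "rep_decomp p u v w"
  shows "p x y z = z\<^sup>2 *\<^sub>R u + z *\<^sub>R v x y + w x y"
  using assms by (simp add: rep_decomp_def vec_eq_iff)

lemma sum_of_squares_coeffs:
  fixes f2 f3 f4 :: "real \<Rightarrow> real \<Rightarrow> real"
  assumes dec: "rep_decomp p u v w"
    and rep: "\<forall>x y z. z ^ 4 + f2 x y * z ^ 2 + f3 x y * z + f4 x y = (\<Sum>i\<in>UNIV. (p x y z $ i) ^ 2)"
  shows "u \<bullet> u = 1 \<and> u \<bullet> v x y = 0 \<and> f2 x y = v x y \<bullet> v x y + 2 * (u \<bullet> w x y)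
    \<and> f3 x y = 2 * (v x y \<bullet> w x y) \<and> f4 x y = w x y \<bullet> w x y"
proof -
  have "z ^ 4 + f2 x y * z\<^sup>2 + f3 x y * z + f4 x y = p x y z \<bullet> p x y z" for z
    using rep by (simp add: inner_vec_def power2_eq_square)
  also have "p x y z \<bullet> p x y z = (u \<bullet> u) * z ^ 4 + 2 * (u \<bullet> v x y) * z ^ 3
      + (v x y \<bullet> v x y + 2 * (u \<bullet> w x y)) * z\<^sup>2 + 2 * (v x y \<bullet> w x y) * z + w x y \<bullet> w x y" for z
    unfolding rep_decomp_vector[OF dec] by (rule inner_quadratic_self)
  finally have "\<forall>z. (u \<bullet> u - 1) * z ^ 4 + (2 * (u \<bullet> v x y)) * z ^ 3
      + (v x y \<bullet> v x y + 2 * (u \<bullet> w x y) - f2 x y) * z\<^sup>2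
      + (2 * (v x y \<bullet> w x y) - f3 x y) * z + (w x y \<bullet> w x y - f4 x y) = 0"
    by (simp add: algebra_simps)
  from quartic_eq_zero_coeffs[OF this] show ?thesis by simp
qed

lemma xi_of_eq_inner:
  assumes "orthogonal_matrix S" and "S *v u = vector [1, 0, 0]"
  shows "xi_of S w x y = 2 * (u \<bullet> w x y)"
proof -
  have "(S *v w x y) $ 1 = (S *v u) \<bullet> (S *v w x y)"
    using assms(2) by (simp add: inner_vec3)
  also have "\<dots> = u \<bullet> w x y"
    using orthogonal_matrix_inner[OF assms(1)] .
  finally show ?thesis by (simp add: xi_of_def)
qed

lemma lagrange_identity_2:
  fixes a2 a3 b2 b3 :: real
  shows "(a2 * b3 - a3 * b2)\<^sup>2 + (a2 * b2 + a3 * b3)\<^sup>2 = (a2\<^sup>2 + a3\<^sup>2) * (b2\<^sup>2 + b3\<^sup>2)"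
  by (simp add: power2_eq_square algebra_simps)

lemma rotated_frame_coeffs:
  fixes f2 f3 f4 :: "real \<Rightarrow> real \<Rightarrow> real" and x y :: real
  assumes dec: "rep_decomp p u v w"
    and rep: "\<forall>x y z. z ^ 4 + f2 x y * z ^ 2 + f3 x y * z + f4 x y = (\<Sum>i\<in>UNIV. (p x y z $ i) ^ 2)"
    and S: "orthogonal_matrix S" "S *v u = vector [1, 0, 0]"
  defines "a \<equiv> S *v v x y" and "b \<equiv> S *v w x y"
  shows "f2 x y - xi_of S w x y = (a$2)\<^sup>2 + (a$3)\<^sup>2
    \<and> 4 * f4 x y - (xi_of S w x y)\<^sup>2 = 4 * ((b$2)\<^sup>2 + (b$3)\<^sup>2)
    \<and> f3 x y = 2 * (a$2 * b$2 + a$3 * b$3)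
    \<and> eta_of S v w x y = 2 * (a$2 * b$3 - a$3 * b$2)"
proof -
  note coeffs = sum_of_squares_coeffs[OF dec rep, of x y]
  have inner_S: "u \<bullet> c = (S *v u) \<bullet> (S *v c)" for c
    using orthogonal_matrix_inner[OF S(1)] by simp
  have a1: "a$1 = 0"
    using coeffs inner_S[of "v x y"] S(2) by (simp add: a_def inner_vec3)
  have xi: "xi_of S w x y = 2 * b$1"
    by (simp add: xi_of_def b_def)
  have "f2 x y = a \<bullet> a + 2 * b$1" and "f3 x y = 2 * (a \<bullet> b)" and "f4 x y = b \<bullet> b"
    using coeffs orthogonal_matrix_inner[OF S(1)] xi_of_eq_inner[OF S, of w x y] xi
    by (simp_all add: a_def b_def)
  then show ?thesis
    using a1 xi by (simp add: inner_vec3 eta_of_def a_def b_def power2_eq_square algebra_simps)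
qed

lemma eta_xi_identity:
  fixes f2 f3 f4 :: "real \<Rightarrow> real \<Rightarrow> real"
  assumes dec: "rep_decomp p u v w"
    and rep: "\<forall>x y z. z ^ 4 + f2 x y * z ^ 2 + f3 x y * z + f4 x y = (\<Sum>i\<in>UNIV. (p x y z $ i) ^ 2)"
    and S: "orthogonal_matrix S" "S *v u = vector [1, 0, 0]"
  shows "(eta_of S v w x y)\<^sup>2 + (f3 x y)\<^sup>2
    = (f2 x y - xi_of S w x y) * (4 * f4 x y - (xi_of S w x y)\<^sup>2)"
proof -
  define a b where "a = S *v v x y" and "b = S *v w x y"
  note frame = rotated_frame_coeffs[OF dec rep S, of x y, folded a_def b_def]
  then have eta: "eta_of S v w x y = 2 * (a$2 * b$3 - a$3 * b$2)"
    and f3: "f3 x y = 2 * (a$2 * b$2 + a$3 * b$3)" by blast+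
  have "(eta_of S v w x y)\<^sup>2 + (f3 x y)\<^sup>2
      = 4 * ((a$2 * b$3 - a$3 * b$2)\<^sup>2 + (a$2 * b$2 + a$3 * b$3)\<^sup>2)"
    unfolding eta f3 by (simp add: power2_eq_square algebra_simps)
  also have "\<dots> = ((a$2)\<^sup>2 + (a$3)\<^sup>2) * (4 * ((b$2)\<^sup>2 + (b$3)\<^sup>2))"
    by (simp add: lagrange_identity_2)
  also have "\<dots> = (f2 x y - xi_of S w x y) * (4 * f4 x y - (xi_of S w x y)\<^sup>2)"
    using frame by simp
  finally show ?thesis .
qed

lemma orthogonal_transform_decomp:
  assumes dec: "rep_decomp p u v w" and dec': "rep_decomp p' u' v' w'"
    and p': "\<forall>x y z. p' x y z = T *v p x y z"
  shows "u' = T *v u \<and> w' x y = T *v w x y"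
proof -
  have "\<forall>z. z\<^sup>2 *\<^sub>R u' + z *\<^sub>R v' x y + w' x y
      = z\<^sup>2 *\<^sub>R (T *v u) + z *\<^sub>R (T *v v x y) + T *v w x y"
    using p' by (simp add: rep_decomp_vector[OF dec] rep_decomp_vector[OF dec']
        matrix_vector_right_distrib matrix_vector_mult_scaleR del: transpose_matrix_vector)
  from quadratic_vector_eq_coeffs[OF this] show ?thesis by simp
qed

theorem lemma3p7:
  fixes f2 f3 f4 :: "real \<Rightarrow> real \<Rightarrow> real"
    and p :: "real \<Rightarrow> real \<Rightarrow> real \<Rightarrow> real^3"
    and u :: "real^3" and v w :: "real \<Rightarrow> real \<Rightarrow> real^3"
  assumes "bin_form 2 f2" and "bin_form 3 f3" and "bin_form 4 f4"
    and dec: "rep_decomp p u v w"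
    and rep: "\<forall>x y z. z ^ 4 + f2 x y * z ^ 2 + f3 x y * z + f4 x y = (\<Sum>i\<in>UNIV. (p x y z $ i) ^ 2)"
  shows "norm u = 1
    \<and> (\<forall>S. orthogonal_matrix S \<and> S *v u = vector [1, 0, 0] \<longrightarrow>
          (\<forall>x y. (eta_of S v w x y) ^ 2 + (f3 x y) ^ 2
                 = (f2 x y - xi_of S w x y) * (4 * f4 x y - (xi_of S w x y) ^ 2))
          \<and> psd2 (\<lambda>x y. f2 x y - xi_of S w x y)
          \<and> psd2 (\<lambda>x y. 4 * f4 x y - (xi_of S w x y) ^ 2))
    \<and> (\<forall>S S'. orthogonal_matrix S \<and> S *v u = vector [1, 0, 0] \<and>
          orthogonal_matrix S' \<and> S' *v u = vector [1, 0, 0] \<longrightarrow> xi_of S w = xi_of S' w)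
    \<and> (\<forall>T p' u' v' w' S S'. orthogonal_matrix T \<and> (\<forall>x y z. p' x y z = transpose T *v p x y z)
          \<and> rep_decomp p' u' v' w'
          \<and> orthogonal_matrix S \<and> S *v u = vector [1, 0, 0]
          \<and> orthogonal_matrix S' \<and> S' *v u' = vector [1, 0, 0]
          \<longrightarrow> xi_of S w = xi_of S' w')"
proof -
  have "norm u = 1"
    using sum_of_squares_coeffs[OF dec rep] by (simp add: norm_eq_1)
  moreover have "(\<forall>x y. (eta_of S v w x y)\<^sup>2 + (f3 x y)\<^sup>2
                 = (f2 x y - xi_of S w x y) * (4 * f4 x y - (xi_of S w x y)\<^sup>2))
          \<and> psd2 (\<lambda>x y. f2 x y - xi_of S w x y)
          \<and> psd2 (\<lambda>x y. 4 * f4 x y - (xi_of S w x y)\<^sup>2)"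
    if "orthogonal_matrix S" "S *v u = vector [1, 0, 0]" for S
    using eta_xi_identity[OF dec rep that] rotated_frame_coeffs[OF dec rep that]
    by (simp add: psd2_def)
  moreover have "xi_of S w = xi_of S' w" if
      "orthogonal_matrix S" "S *v u = vector [1, 0, 0]"
      "orthogonal_matrix S'" "S' *v u = vector [1, 0, 0]" for S S'
    using xi_of_eq_inner[OF that(1,2)] xi_of_eq_inner[OF that(3,4)] by (simp add: fun_eq_iff)
  moreover have "xi_of S w = xi_of S' w'"
    if "orthogonal_matrix T" "\<forall>x y z. p' x y z = transpose T *v p x y z"
      "rep_decomp p' u' v' w'" "orthogonal_matrix S" "S *v u = vector [1, 0, 0]"
      "orthogonal_matrix S'" "S' *v u' = vector [1, 0, 0]" for T p' u' v' w' S S'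
  proof -
    have "u' \<bullet> w' x y = u \<bullet> w x y" for x y
      using orthogonal_transform_decomp[OF dec that(3,2), of x y]
        orthogonal_matrix_inner[of "transpose T"] that(1) by simp
    then show ?thesis
      using xi_of_eq_inner[OF that(4,5)] xi_of_eq_inner[OF that(6,7)] by (simp add: fun_eq_iff)
  qed
  ultimately show ?thesis by blast
qed

end
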